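(* Let $X,Y$ be Scott domains quantified, respectively, by partial metrics $p_X,p_Y$ with values in $[0,1]$, and let $(a_n)_{n\geq1}$ be an enumeration of a countable basis of $X$. Then for every $0<\theta\leq\frac12$, the domain $X\Rightarrow Y$ of Scott-continuous functions from $X$ to $Y$ (ordered pointwise) is quantified by the partial metric $$p^\theta_{X\Rightarrow Y}(f,g)=\sum_{n=1}^\infty\theta^n\,p_Y\big(f(a_n),g(a_n)\big).$$
   Context: A partial metric (PM) on $X$ is $p:X\times X\to[0,+\infty]$ with $p(x,x)\leq p(x,y)$; $p(x,x)=p(x,y)=p(y,y)\Rightarrow x=y$; $p(x,y)=p(y,x)$; $p(x,y)\leq p(x,z)+p(z,y)-p(z,z)$. Open balls $B^p_\epsilon(x)=\{y\mid p(y,x)<p(x,x)+\epsilon\}$; $\mathcal O_p(X)$ is the topology of unions of open balls. In a dcpo, $x\ll y$ iff every directed $\Delta$ with $y\leq\bigvee\Delta$ contains some $d\geq x$; a basis is $B\subseteq X$ with $\{b\in B\mid b\ll x\}$ directed with join $x$ for each $x$; $x$ is compact if $x\ll x$. A Scott domain is a dcpo with a countable basis of compact elements which is bounded complete (every finite subset with an upper bound has a join). Scott-continuous functions are monotone maps preserving joins of directed sets. The Scott topology $\mathcal O_\sigma(X)$ consists of upper sets $U$ with $x\in U\Rightarrow\exists y\ll x,\ y\in U$. A dcpo $X$ is quantified by $p$ if $\mathcal O_\sigma(X)=\mathcal O_p(X)$. *)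

theory Defs
  imports Complex_Main "HOL-Library.FuncSet" "HOL-Library.Countable_Set"
begin

definition partial_order_on :: "'a set \<Rightarrow> ('a \<Rightarrow> 'a \<Rightarrow> bool) \<Rightarrow> bool" where
  "partial_order_on X le \<longleftrightarrow>
     (\<forall>x\<in>X. le x x) \<and>
     (\<forall>x\<in>X. \<forall>y\<in>X. le x y \<and> le y x \<longrightarrow> x = y) \<and>
     (\<forall>x\<in>X. \<forall>y\<in>X. \<forall>z\<in>X. le x y \<and> le y z \<longrightarrow> le x z)"

definition is_lub :: "'a set \<Rightarrow> ('a \<Rightarrow> 'a \<Rightarrow> bool) \<Rightarrow> 'a set \<Rightarrow> 'a \<Rightarrow> bool" where
  "is_lub X le D s \<longleftrightarrow> s \<in> X \<and> (\<forall>d\<in>D. le d s) \<and>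
     (\<forall>u\<in>X. (\<forall>d\<in>D. le d u) \<longrightarrow> le s u)"

definition directed :: "'a set \<Rightarrow> ('a \<Rightarrow> 'a \<Rightarrow> bool) \<Rightarrow> 'a set \<Rightarrow> bool" where
  "directed X le D \<longleftrightarrow> D \<subseteq> X \<and> D \<noteq> {} \<and>
     (\<forall>x\<in>D. \<forall>y\<in>D. \<exists>z\<in>D. le x z \<and> le y z)"

definition dcpo :: "'a set \<Rightarrow> ('a \<Rightarrow> 'a \<Rightarrow> bool) \<Rightarrow> bool" where
  "dcpo X le \<longleftrightarrow> partial_order_on X le \<and>
     (\<forall>D. directed X le D \<longrightarrow> (\<exists>s. is_lub X le D s))"

definition way_below :: "'a set \<Rightarrow> ('a \<Rightarrow> 'a \<Rightarrow> bool) \<Rightarrow> 'a \<Rightarrow> 'a \<Rightarrow> bool" where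
  "way_below X le x y \<longleftrightarrow>
     (\<forall>D s. directed X le D \<longrightarrow> is_lub X le D s \<longrightarrow> le y s \<longrightarrow> (\<exists>d\<in>D. le x d))"

definition is_basis :: "'a set \<Rightarrow> ('a \<Rightarrow> 'a \<Rightarrow> bool) \<Rightarrow> 'a set \<Rightarrow> bool" where
  "is_basis X le B \<longleftrightarrow> B \<subseteq> X \<and>
     (\<forall>x\<in>X. directed X le {b\<in>B. way_below X le b x} \<and>
             is_lub X le {b\<in>B. way_below X le b x} x)"

definition compact_elem :: "'a set \<Rightarrow> ('a \<Rightarrow> 'a \<Rightarrow> bool) \<Rightarrow> 'a \<Rightarrow> bool" where
  "compact_elem X le x \<longleftrightarrow> way_below X le x x"

definition bounded_complete :: "'a set \<Rightarrow> ('a \<Rightarrow> 'a \<Rightarrow> bool) \<Rightarrow> bool" where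
  "bounded_complete X le \<longleftrightarrow>
     (\<forall>F. F \<subseteq> X \<and> finite F \<and> (\<exists>u\<in>X. \<forall>f\<in>F. le f u) \<longrightarrow> (\<exists>s. is_lub X le F s))"

definition scott_domain :: "'a set \<Rightarrow> ('a \<Rightarrow> 'a \<Rightarrow> bool) \<Rightarrow> bool" where
  "scott_domain X le \<longleftrightarrow> dcpo X le \<and> bounded_complete X le \<and>
     (\<exists>B. countable B \<and> is_basis X le B \<and> (\<forall>b\<in>B. compact_elem X le b))"

definition scott_continuous ::
  "'a set \<Rightarrow> ('a \<Rightarrow> 'a \<Rightarrow> bool) \<Rightarrow> 'b set \<Rightarrow> ('b \<Rightarrow> 'b \<Rightarrow> bool) \<Rightarrow> ('a \<Rightarrow> 'b) \<Rightarrow> bool" where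
  "scott_continuous X leX Y leY f \<longleftrightarrow>
     f \<in> X \<rightarrow> Y \<and>
     (\<forall>x\<in>X. \<forall>y\<in>X. leX x y \<longrightarrow> leY (f x) (f y)) \<and>
     (\<forall>D s. directed X leX D \<longrightarrow> is_lub X leX D s \<longrightarrow> is_lub Y leY (f ` D) (f s))"

definition scott_open_sets :: "'a set \<Rightarrow> ('a \<Rightarrow> 'a \<Rightarrow> bool) \<Rightarrow> 'a set set" where
  "scott_open_sets X le = {U. U \<subseteq> X \<and>
     (\<forall>x\<in>U. \<forall>y\<in>X. le x y \<longrightarrow> y \<in> U) \<and>
     (\<forall>x\<in>U. \<exists>y\<in>U. way_below X le y x)}"

definition partial_metric :: "'a set \<Rightarrow> ('a \<Rightarrow> 'a \<Rightarrow> real) \<Rightarrow> bool" where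
  "partial_metric X p \<longleftrightarrow>
     (\<forall>x\<in>X. \<forall>y\<in>X. 0 \<le> p x y) \<and>
     (\<forall>x\<in>X. \<forall>y\<in>X. p x x \<le> p x y) \<and>
     (\<forall>x\<in>X. \<forall>y\<in>X. p x x = p x y \<and> p x y = p y y \<longrightarrow> x = y) \<and>
     (\<forall>x\<in>X. \<forall>y\<in>X. p x y = p y x) \<and>
     (\<forall>x\<in>X. \<forall>y\<in>X. \<forall>z\<in>X. p x y \<le> p x z + p z y - p z z)"

definition pm_ball :: "'a set \<Rightarrow> ('a \<Rightarrow> 'a \<Rightarrow> real) \<Rightarrow> 'a \<Rightarrow> real \<Rightarrow> 'a set" where
  "pm_ball X p x e = {y\<in>X. p y x < p x x + e}"

definition pm_open_sets :: "'a set \<Rightarrow> ('a \<Rightarrow> 'a \<Rightarrow> real) \<Rightarrow> 'a set set" where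
  "pm_open_sets X p = {\<Union>\<B> | \<B>. \<B> \<subseteq> {pm_ball X p x e | x e. x \<in> X \<and> e > 0}}"

definition quantified_by :: "'a set \<Rightarrow> ('a \<Rightarrow> 'a \<Rightarrow> bool) \<Rightarrow> ('a \<Rightarrow> 'a \<Rightarrow> real) \<Rightarrow> bool" where
  "quantified_by X le p \<longleftrightarrow> dcpo X le \<and> partial_metric X p \<and>
     scott_open_sets X le = pm_open_sets X p"

definition fun_space :: "'a set \<Rightarrow> ('a \<Rightarrow> 'a \<Rightarrow> bool) \<Rightarrow> 'b set \<Rightarrow> ('b \<Rightarrow> 'b \<Rightarrow> bool) \<Rightarrow> ('a \<Rightarrow> 'b) set" where
  "fun_space X leX Y leY = {f \<in> extensional X. scott_continuous X leX Y leY f}"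

definition fun_le :: "'a set \<Rightarrow> ('b \<Rightarrow> 'b \<Rightarrow> bool) \<Rightarrow> ('a \<Rightarrow> 'b) \<Rightarrow> ('a \<Rightarrow> 'b) \<Rightarrow> bool" where
  "fun_le X leY f g \<longleftrightarrow> (\<forall>x\<in>X. leY (f x) (g x))"

text \<open>The weighted partial metric; the enumeration a is indexed from 1.\<close>
definition fun_pm :: "real \<Rightarrow> (nat \<Rightarrow> 'a) \<Rightarrow> ('b \<Rightarrow> 'b \<Rightarrow> real) \<Rightarrow> ('a \<Rightarrow> 'b) \<Rightarrow> ('a \<Rightarrow> 'b) \<Rightarrow> real" where
  "fun_pm \<theta> a pY f g = (\<Sum>n. \<theta> ^ (Suc n) * pY (f (a (Suc n))) (g (a (Suc n))))"

end

theory Submission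
  imports Defs
begin

(*
  The Scott-continuous maps from X to Y form an algebraic domain: every f is the directed join of
  its step functions, the finite joins of single-step maps "b above c" over compact pairs with
  b <= f c; these joins exist because Y is bounded complete.

  A Scott-open U containing f therefore contains a step function s below f, and s <= h is a finite
  conjunction of conditions b <= h c. Each such c is compact, hence equal to some a (m + 1), and
  for the weighted partial metric P the excess P h f - P f f dominates
  theta^(m+1) (p_Y (h c) (f c) - p_Y (f c) (f c)); since the upper set of a compact b is
  p_Y-open, every condition b <= h c is P-open, and so is U.

  Conversely, P-balls are upper sets because p_Y decreases along the order, and they are
  inaccessible by directed joins: beyond some N the weights theta^(n+1) have small total, and on
  the first N coordinates the p_Y-balls, being Scott-open, are entered by a single member of the
  directed set. In an algebraic domain such sets are Scott-open.
*)

section \<open>Scott-open sets and compact elements\<close>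

lemma partial_order_on_refl: "partial_order_on X le \<Longrightarrow> x \<in> X \<Longrightarrow> le x x"
  unfolding partial_order_on_def by blast

lemma partial_order_on_antisym:
  "partial_order_on X le \<Longrightarrow> x \<in> X \<Longrightarrow> y \<in> X \<Longrightarrow> le x y \<Longrightarrow> le y x \<Longrightarrow> x = y"
  unfolding partial_order_on_def by blast

lemma partial_order_on_trans:
  "partial_order_on X le \<Longrightarrow> x \<in> X \<Longrightarrow> y \<in> X \<Longrightarrow> z \<in> X \<Longrightarrow> le x y \<Longrightarrow> le y z \<Longrightarrow> le x z"
  unfolding partial_order_on_def by blast

lemma is_lubD:
  "is_lub X le D s \<Longrightarrow> s \<in> X"
  "is_lub X le D s \<Longrightarrow> d \<in> D \<Longrightarrow> le d s"
  "is_lub X le D s \<Longrightarrow> u \<in> X \<Longrightarrow> (\<And>d. d \<in> D \<Longrightarrow> le d u) \<Longrightarrow> le s u"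
  unfolding is_lub_def by auto

lemma is_lub_unique: "partial_order_on X le \<Longrightarrow> is_lub X le D s \<Longrightarrow> is_lub X le D t \<Longrightarrow> s = t"
  unfolding is_lub_def using partial_order_on_antisym[of X le s t] by blast

lemma directed_subset: "directed X le D \<Longrightarrow> D \<subseteq> X"
  by (simp add: directed_def)

lemma directed_finite_common_witness:
  assumes D: "directed X le D" and "finite I"
    and witness: "\<And>i. i \<in> I \<Longrightarrow> \<exists>d\<in>D. P i d"
    and upward: "\<And>i d d'. i \<in> I \<Longrightarrow> P i d \<Longrightarrow> d \<in> D \<Longrightarrow> d' \<in> D \<Longrightarrow> le d d' \<Longrightarrow> P i d'"
  shows "\<exists>d\<in>D. \<forall>i\<in>I. P i d"
  using \<open>finite I\<close> witness upward
proof (induction I rule: finite_induct)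
  case empty
  then show ?case using D unfolding directed_def by auto
next
  case (insert j I)
  have "\<exists>d\<in>D. \<forall>i\<in>I. P i d"
    by (rule insert.IH) (use insert.prems in blast)+
  then obtain d1 where d1: "d1 \<in> D" "\<forall>i\<in>I. P i d1" by blast
  obtain d2 where d2: "d2 \<in> D" "P j d2" using insert.prems(1) by blast
  obtain d where d: "d \<in> D" "le d1 d" "le d2 d" using D d1 d2 unfolding directed_def by meson
  have "P j d" using insert.prems(2)[of j d2 d] d2 d by blast
  moreover have "P i d" if "i \<in> I" for i using insert.prems(2)[of i d1 d] that d1 d by blast
  ultimately show ?case using d by blast
qed

lemma way_below_imp_le:
  assumes po: "partial_order_on X le" and "y \<in> X" and "way_below X le x y"
  shows "le x y"
proof -
  have "directed X le {y}" "is_lub X le {y} y"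
    using po \<open>y \<in> X\<close> unfolding directed_def is_lub_def by (auto simp: partial_order_on_refl)
  then show ?thesis
    using assms partial_order_on_refl unfolding way_below_def by fastforce
qed

lemma compact_elem_below_lub:
  "compact_elem X le c \<Longrightarrow> directed X le D \<Longrightarrow> is_lub X le D s \<Longrightarrow> le c s \<Longrightarrow> \<exists>d\<in>D. le c d"
  by (simp add: way_below_def compact_elem_def)

lemma compact_elem_way_below:
  assumes po: "partial_order_on X le" and "c \<in> X" "x \<in> X" "compact_elem X le c" "le c x"
  shows "way_below X le c x"
  unfolding way_below_def
proof (intro allI impI)
  fix D s assume D: "directed X le D" and s: "is_lub X le D s" and "le x s"
  then have "le c s" using partial_order_on_trans[OF po assms(2,3) is_lubD(1)[OF s]] assms(5) by blast
  then show "\<exists>d\<in>D. le c d" using compact_elem_below_lub[OF assms(4) D s(1)] by blast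
qed

lemma compact_elem_in_basis:
  assumes po: "partial_order_on X le" and B: "is_basis X le B"
    and c: "c \<in> X" "compact_elem X le c"
  shows "c \<in> B"
proof -
  have D: "directed X le {b\<in>B. way_below X le b c}" and lub: "is_lub X le {b\<in>B. way_below X le b c} c"
    using B c unfolding is_basis_def by auto
  obtain b where b: "b \<in> B" "way_below X le b c" "le c b"
    using compact_elem_below_lub[OF c(2) D lub partial_order_on_refl[OF po c(1)]] by blast
  have "b \<in> X" using B b(1) unfolding is_basis_def by blast
  then have "b = c"
    using partial_order_on_antisym[OF po _ c(1)] way_below_imp_le[OF po c(1) b(2)] b(3) by blast
  then show ?thesis using b by simp
qed

lemma scott_open_inaccessible:
  assumes po: "partial_order_on X le" and U: "U \<in> scott_open_sets X le"
    and D: "directed X le D" and s: "is_lub X le D s" "s \<in> U"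
  shows "\<exists>d\<in>D. d \<in> U"
proof -
  obtain y where y: "y \<in> U" "way_below X le y s" using U s unfolding scott_open_sets_def by blast
  obtain d where d: "d \<in> D" "le y d"
    using y(2) D s(1) partial_order_on_refl[OF po is_lubD(1)[OF s(1)]] unfolding way_below_def by meson
  have "d \<in> U" using U y d directed_subset[OF D] unfolding scott_open_sets_def by blast
  then show ?thesis using d by blast
qed

lemma scott_open_upset_compact:
  assumes po: "partial_order_on X le" and c: "c \<in> X" "compact_elem X le c"
  shows "{x\<in>X. le c x} \<in> scott_open_sets X le"
  unfolding scott_open_sets_def
proof safe
  fix x y assume "x \<in> X" "le c x" "y \<in> X" "le x y"
  then show "le c y" using partial_order_on_trans[OF po c(1)] by blast
next
  fix x assume "x \<in> X" "le c x"
  then show "\<exists>y\<in>{x\<in>X. le c x}. way_below X le y x"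
    using compact_elem_way_below[OF po c(1) _ c(2)] c(1) partial_order_on_refl[OF po c(1)] by blast
qed

lemma scott_open_setsI:
  assumes "U \<subseteq> X"
    and upper: "\<And>x y. x \<in> U \<Longrightarrow> y \<in> X \<Longrightarrow> le x y \<Longrightarrow> y \<in> U"
    and inaccessible: "\<And>D s. directed X le D \<Longrightarrow> is_lub X le D s \<Longrightarrow> s \<in> U \<Longrightarrow> \<exists>d\<in>D. d \<in> U"
    and approximants:
      "\<And>x. x \<in> U \<Longrightarrow> \<exists>D. directed X le D \<and> is_lub X le D x \<and> (\<forall>d\<in>D. way_below X le d x)"
  shows "U \<in> scott_open_sets X le"
proof -
  have "\<exists>y\<in>U. way_below X le y x" if "x \<in> U" for x
  proof -
    obtain D where "directed X le D" "is_lub X le D x" "\<forall>d\<in>D. way_below X le d x"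
      using approximants[OF \<open>x \<in> U\<close>] by blast
    then show ?thesis using inaccessible \<open>x \<in> U\<close> by blast
  qed
  then show ?thesis unfolding scott_open_sets_def using \<open>U \<subseteq> X\<close> upper by blast
qed

section \<open>The topology of a partial metric\<close>

lemma pm_ball_subset: "pm_ball X p x e \<subseteq> X"
  by (auto simp: pm_ball_def)

lemma pm_open_sets_iff:
  assumes pm: "partial_metric X p"
  shows "U \<in> pm_open_sets X p \<longleftrightarrow> U \<subseteq> X \<and> (\<forall>x\<in>U. \<exists>e>0. pm_ball X p x e \<subseteq> U)"
proof
  assume "U \<in> pm_open_sets X p"
  then obtain \<B> where U: "U = \<Union>\<B>" and \<B>: "\<B> \<subseteq> {pm_ball X p x e | x e. x \<in> X \<and> e > 0}"
    unfolding pm_open_sets_def by blast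
  have "\<exists>e>0. pm_ball X p x e \<subseteq> U" if "x \<in> U" for x
  proof -
    obtain z \<delta> where z: "z \<in> X" "x \<in> pm_ball X p z \<delta>" "pm_ball X p z \<delta> \<subseteq> U"
      using U \<B> \<open>x \<in> U\<close> by blast
    have "x \<in> X" and "p x z < p z z + \<delta>" using z(2) by (auto simp: pm_ball_def)
    define \<eta> where "\<eta> = p z z + \<delta> - p x z"
    have "pm_ball X p x \<eta> \<subseteq> pm_ball X p z \<delta>"
    proof
      fix y assume "y \<in> pm_ball X p x \<eta>"
      then have "y \<in> X" "p y x < p x x + \<eta>" by (auto simp: pm_ball_def)
      moreover have "p y z \<le> p y x + p x z - p x x"
        using pm \<open>x \<in> X\<close> z(1) \<open>y \<in> X\<close> unfolding partial_metric_def by blast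
      ultimately show "y \<in> pm_ball X p z \<delta>" unfolding pm_ball_def \<eta>_def by auto
    qed
    moreover have "\<eta> > 0" using \<open>p x z < p z z + \<delta>\<close> \<eta>_def by simp
    ultimately show ?thesis using z(3) by blast
  qed
  moreover have "U \<subseteq> X" using U \<B> by (force simp: pm_ball_def)
  ultimately show "U \<subseteq> X \<and> (\<forall>x\<in>U. \<exists>e>0. pm_ball X p x e \<subseteq> U)" by blast
next
  assume U: "U \<subseteq> X \<and> (\<forall>x\<in>U. \<exists>e>0. pm_ball X p x e \<subseteq> U)"
  let ?\<B> = "{pm_ball X p x e | x e. x \<in> X \<and> e > 0 \<and> pm_ball X p x e \<subseteq> U}"
  have "U = \<Union>?\<B>"
  proof
    show "U \<subseteq> \<Union>?\<B>"
    proof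
      fix x assume "x \<in> U"
      then obtain e where "e > 0" "pm_ball X p x e \<subseteq> U" using U by blast
      moreover have "x \<in> pm_ball X p x e" using \<open>x \<in> U\<close> U \<open>e > 0\<close> by (auto simp: pm_ball_def)
      ultimately show "x \<in> \<Union>?\<B>" using \<open>x \<in> U\<close> U by blast
    qed
  qed blast
  then show "U \<in> pm_open_sets X p" unfolding pm_open_sets_def by blast
qed

lemma pm_open_sets_carrier:
  assumes "partial_metric X p"
  shows "X \<in> pm_open_sets X p"
  unfolding pm_open_sets_iff[OF assms]
  by (intro conjI ballI exI[of _ 1]) (auto simp: pm_ball_def)

lemma pm_open_sets_Int:
  assumes pm: "partial_metric X p" and U: "U \<in> pm_open_sets X p" and V: "V \<in> pm_open_sets X p"
  shows "U \<inter> V \<in> pm_open_sets X p"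
proof -
  have "\<exists>r>0. pm_ball X p x r \<subseteq> U \<inter> V" if x: "x \<in> U \<inter> V" for x
  proof -
    obtain d where "d > 0" "pm_ball X p x d \<subseteq> U"
      using U x by (auto simp: pm_open_sets_iff[OF pm])
    moreover obtain e where "e > 0" "pm_ball X p x e \<subseteq> V"
      using V x by (auto simp: pm_open_sets_iff[OF pm])
    moreover have "pm_ball X p x (min d e) \<subseteq> pm_ball X p x d \<inter> pm_ball X p x e"
      by (auto simp: pm_ball_def)
    ultimately show ?thesis by (intro exI[of _ "min d e"]) auto
  qed
  moreover have "U \<inter> V \<subseteq> X" using U by (auto simp: pm_open_sets_iff[OF pm])
  ultimately show ?thesis by (simp add: pm_open_sets_iff[OF pm])
qed

lemma pm_open_sets_INT_finite:
  assumes pm: "partial_metric X p" and "finite I" and "\<And>i. i \<in> I \<Longrightarrow> U i \<in> pm_open_sets X p"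
  shows "X \<inter> (\<Inter>i\<in>I. U i) \<in> pm_open_sets X p"
  using \<open>finite I\<close> assms(3)
proof (induction I rule: finite_induct)
  case empty
  then show ?case using pm_open_sets_carrier[OF pm] by simp
next
  case (insert i I)
  have "X \<inter> (\<Inter>j\<in>I. U j) \<in> pm_open_sets X p"
    by (rule insert.IH) (use insert.prems in blast)
  moreover have "U i \<in> pm_open_sets X p" using insert.prems by blast
  ultimately have "U i \<inter> (X \<inter> (\<Inter>j\<in>I. U j)) \<in> pm_open_sets X p"
    using pm_open_sets_Int[OF pm] by blast
  moreover have "X \<inter> (\<Inter>j\<in>insert i I. U j) = U i \<inter> (X \<inter> (\<Inter>j\<in>I. U j))" by blast
  ultimately show ?case by simp
qed

section \<open>Partial metrics quantifying a dcpo\<close>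

locale quantified_dcpo =
  fixes Y :: "'b set" and le :: "'b \<Rightarrow> 'b \<Rightarrow> bool" and p :: "'b \<Rightarrow> 'b \<Rightarrow> real"
  assumes quantified: "quantified_by Y le p"
begin

lemma partial_order: "partial_order_on Y le"
  using quantified by (simp add: quantified_by_def dcpo_def)

lemma partial_metric: "partial_metric Y p"
  using quantified by (simp add: quantified_by_def)

lemma scott_open_sets_eq: "scott_open_sets Y le = pm_open_sets Y p"
  using quantified by (simp add: quantified_by_def)

lemma pm_nonneg: "x \<in> Y \<Longrightarrow> y \<in> Y \<Longrightarrow> 0 \<le> p x y"
  using partial_metric by (simp add: partial_metric_def)

lemma pm_self_le: "x \<in> Y \<Longrightarrow> y \<in> Y \<Longrightarrow> p x x \<le> p x y"
  using partial_metric by (simp add: partial_metric_def)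

lemma pm_sym: "x \<in> Y \<Longrightarrow> y \<in> Y \<Longrightarrow> p x y = p y x"
  using partial_metric by (simp add: partial_metric_def)

lemma pm_eqI: "x \<in> Y \<Longrightarrow> y \<in> Y \<Longrightarrow> p x x = p x y \<Longrightarrow> p x y = p y y \<Longrightarrow> x = y"
  using partial_metric by (simp add: partial_metric_def)

lemma pm_triangle: "x \<in> Y \<Longrightarrow> y \<in> Y \<Longrightarrow> z \<in> Y \<Longrightarrow> p x y \<le> p x z + p z y - p z z"
  using partial_metric unfolding partial_metric_def by blast

lemma pm_ball_scott_open: "x \<in> Y \<Longrightarrow> 0 < e \<Longrightarrow> pm_ball Y p x e \<in> scott_open_sets Y le"
  unfolding scott_open_sets_eq pm_open_sets_def by blast

lemma pm_eq_self_if_le: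
  assumes x: "x \<in> Y" and y: "y \<in> Y" and "le x y"
  shows "p x y = p x x"
proof -
  have "p y x \<le> p x x + e" if "0 < e" for e
  proof -
    have "x \<in> pm_ball Y p x e" using x \<open>0 < e\<close> by (simp add: pm_ball_def)
    then have "y \<in> pm_ball Y p x e"
      using pm_ball_scott_open[OF x \<open>0 < e\<close>] y \<open>le x y\<close> unfolding scott_open_sets_def by blast
    then show ?thesis by (simp add: pm_ball_def)
  qed
  then have "p y x \<le> p x x" by (rule field_le_epsilon)
  then show ?thesis using pm_self_le[OF x y] pm_sym[OF x y] by simp
qed

lemma pm_antimono:
  assumes "x \<in> Y" "y \<in> Y" "z \<in> Y" "le x y"
  shows "p y z \<le> p x z"
  using pm_triangle[of y z x] pm_eq_self_if_le[of x y] pm_sym[of x y] assms by simp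

lemma pm_below_directed_lub:
  assumes D: "directed Y le D" and s: "is_lub Y le D s" and z: "z \<in> Y" and less: "p s z < t"
  shows "\<exists>d\<in>D. p d z < t"
proof -
  have "s \<in> Y" using s by (rule is_lubD)
  then have "p z z \<le> p s z" using pm_self_le[OF z] pm_sym[OF z] by simp
  then have "s \<in> pm_ball Y p z (t - p z z)" and "0 < t - p z z"
    using less \<open>s \<in> Y\<close> by (auto simp: pm_ball_def)
  then obtain d where "d \<in> D" "d \<in> pm_ball Y p z (t - p z z)"
    using scott_open_inaccessible[OF partial_order pm_ball_scott_open[OF z] D s] by blast
  then show ?thesis by (auto simp: pm_ball_def)
qed

end

section \<open>The function space and its step functions\<close>

locale algebraic_fun_space =
  fixes X :: "'a set" and leX :: "'a \<Rightarrow> 'a \<Rightarrow> bool" and BX :: "'a set"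
    and Y :: "'b set" and leY :: "'b \<Rightarrow> 'b \<Rightarrow> bool" and BY :: "'b set"
  assumes partial_order_X: "partial_order_on X leX"
    and basis_X: "is_basis X leX BX" and compact_basis_X: "\<forall>c\<in>BX. compact_elem X leX c"
    and dcpo_Y: "dcpo Y leY" and bounded_complete_Y: "bounded_complete Y leY"
    and basis_Y: "is_basis Y leY BY" and compact_basis_Y: "\<forall>b\<in>BY. compact_elem Y leY b"
begin

abbreviation "FS \<equiv> fun_space X leX Y leY"
abbreviation "FL \<equiv> fun_le X leY"

lemma partial_order_Y: "partial_order_on Y leY"
  using dcpo_Y by (simp add: dcpo_def)

lemma fun_spaceD:
  assumes "f \<in> FS"
  shows "f \<in> extensional X" "f \<in> X \<rightarrow> Y"
    "\<And>x y. x \<in> X \<Longrightarrow> y \<in> X \<Longrightarrow> leX x y \<Longrightarrow> leY (f x) (f y)"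
    "\<And>D s. directed X leX D \<Longrightarrow> is_lub X leX D s \<Longrightarrow> is_lub Y leY (f ` D) (f s)"
  using assms unfolding fun_space_def scott_continuous_def by auto

lemma fun_space_apply: "f \<in> FS \<Longrightarrow> x \<in> X \<Longrightarrow> f x \<in> Y"
  using fun_spaceD(2) by blast

lemma fun_space_monotoneI:
  assumes "f \<in> extensional X" "f \<in> X \<rightarrow> Y"
    and mono: "\<And>x y. x \<in> X \<Longrightarrow> y \<in> X \<Longrightarrow> leX x y \<Longrightarrow> leY (f x) (f y)"
    and lub_le: "\<And>D s u. directed X leX D \<Longrightarrow> is_lub X leX D s \<Longrightarrow> u \<in> Y \<Longrightarrow>
      (\<And>x. x \<in> D \<Longrightarrow> leY (f x) u) \<Longrightarrow> leY (f s) u"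
  shows "f \<in> FS"
proof -
  have "is_lub Y leY (f ` D) (f s)" if D: "directed X leX D" and s: "is_lub X leX D s" for D s
  proof -
    have "s \<in> X" using s by (rule is_lubD)
    moreover have "leY (f x) (f s)" if "x \<in> D" for x
      using mono[of x s] \<open>s \<in> X\<close> that directed_subset[OF D] is_lubD(2)[OF s] by blast
    ultimately show ?thesis
      unfolding is_lub_def using \<open>f \<in> X \<rightarrow> Y\<close> lub_le[OF D s] by blast
  qed
  then show ?thesis using assms unfolding fun_space_def scott_continuous_def by blast
qed

lemma partial_order_fun_space: "partial_order_on FS FL"
  unfolding partial_order_on_def
proof (intro conjI ballI impI)
  fix f assume "f \<in> FS"
  then show "FL f f" unfolding fun_le_def using partial_order_on_refl[OF partial_order_Y] fun_space_apply by blast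
next
  fix f g assume f: "f \<in> FS" and g: "g \<in> FS" and fg: "FL f g \<and> FL g f"
  show "f = g"
  proof (rule extensionalityI[OF fun_spaceD(1)[OF f] fun_spaceD(1)[OF g]])
    fix x assume "x \<in> X"
    then show "f x = g x"
      using partial_order_on_antisym[OF partial_order_Y fun_space_apply[OF f] fun_space_apply[OF g]] fg
      unfolding fun_le_def by blast
  qed
next
  fix f g h assume f: "f \<in> FS" and g: "g \<in> FS" and h: "h \<in> FS" and fgh: "FL f g \<and> FL g h"
  show "FL f h" unfolding fun_le_def
  proof
    fix x assume "x \<in> X"
    then show "leY (f x) (h x)"
      using partial_order_on_trans[OF partial_order_Y fun_space_apply[OF f] fun_space_apply[OF g]
          fun_space_apply[OF h]] fgh
      unfolding fun_le_def by blast
  qed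
qed

lemma basis_X_at:
  "x \<in> X \<Longrightarrow> directed X leX {c\<in>BX. way_below X leX c x} \<and> is_lub X leX {c\<in>BX. way_below X leX c x} x"
  using basis_X unfolding is_basis_def by blast

lemma basis_Y_at:
  "y \<in> Y \<Longrightarrow> directed Y leY {b\<in>BY. way_below Y leY b y} \<and> is_lub Y leY {b\<in>BY. way_below Y leY b y} y"
  using basis_Y unfolding is_basis_def by blast

lemma basis_X_subset: "BX \<subseteq> X"
  using basis_X unfolding is_basis_def by blast

lemma basis_Y_subset: "BY \<subseteq> Y"
  using basis_Y unfolding is_basis_def by blast

lemma fun_space_basis_image:
  assumes f: "f \<in> FS" and x: "x \<in> X"
  shows "is_lub Y leY (f ` {c\<in>BX. way_below X leX c x}) (f x)"
  using fun_spaceD(4)[OF f] basis_X_at[OF x] by blast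

definition pointwise_lub :: "('a \<Rightarrow> 'b) set \<Rightarrow> 'a \<Rightarrow> 'b" where
  "pointwise_lub D = restrict (\<lambda>x. SOME s. is_lub Y leY ((\<lambda>d. d x) ` D) s) X"

lemma directed_pointwise:
  assumes D: "directed FS FL D" and x: "x \<in> X"
  shows "directed Y leY ((\<lambda>d. d x) ` D)"
  unfolding directed_def
proof (intro conjI ballI)
  show "(\<lambda>d. d x) ` D \<subseteq> Y" using directed_subset[OF D] fun_space_apply x by blast
  show "(\<lambda>d. d x) ` D \<noteq> {}" using D by (simp add: directed_def)
next
  fix u v assume "u \<in> (\<lambda>d. d x) ` D" "v \<in> (\<lambda>d. d x) ` D"
  then obtain d1 d2 where d: "d1 \<in> D" "d2 \<in> D" "u = d1 x" "v = d2 x" by blast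
  then obtain d3 where "d3 \<in> D" "FL d1 d3" "FL d2 d3" using D unfolding directed_def by meson
  then show "\<exists>w\<in>(\<lambda>d. d x) ` D. leY u w \<and> leY v w" using d x unfolding fun_le_def by blast
qed

lemma is_lub_pointwise_lub:
  assumes D: "directed FS FL D" and x: "x \<in> X"
  shows "is_lub Y leY ((\<lambda>d. d x) ` D) (pointwise_lub D x)"
proof -
  have "\<exists>s. is_lub Y leY ((\<lambda>d. d x) ` D) s"
    using dcpo_Y directed_pointwise[OF D x] unfolding dcpo_def by blast
  then show ?thesis unfolding pointwise_lub_def using x by (simp add: someI_ex)
qed

lemma pointwise_lub_mono:
  assumes D: "directed FS FL D" and x: "x \<in> X" and y: "y \<in> X" and "leX x y"
  shows "leY (pointwise_lub D x) (pointwise_lub D y)"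
proof (rule is_lubD(3)[OF is_lub_pointwise_lub[OF D x] is_lubD(1)[OF is_lub_pointwise_lub[OF D y]]])
  fix t assume "t \<in> (\<lambda>d. d x) ` D"
  then obtain d where d: "d \<in> D" "t = d x" by blast
  have "d \<in> FS" using d directed_subset[OF D] by blast
  have "leY (d x) (d y)" using fun_spaceD(3)[OF \<open>d \<in> FS\<close> x y \<open>leX x y\<close>] .
  moreover have "leY (d y) (pointwise_lub D y)" using is_lubD(2)[OF is_lub_pointwise_lub[OF D y]] d by blast
  ultimately show "leY t (pointwise_lub D y)"
    using partial_order_on_trans[OF partial_order_Y fun_space_apply[OF \<open>d \<in> FS\<close> x]
        fun_space_apply[OF \<open>d \<in> FS\<close> y] is_lubD(1)[OF is_lub_pointwise_lub[OF D y]]] d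
    by blast
qed

lemma pointwise_lub_in_fun_space:
  assumes D: "directed FS FL D"
  shows "pointwise_lub D \<in> FS"
proof (rule fun_space_monotoneI)
  show "pointwise_lub D \<in> extensional X" unfolding pointwise_lub_def by simp
  show "pointwise_lub D \<in> X \<rightarrow> Y" using is_lubD(1)[OF is_lub_pointwise_lub[OF D]] by blast
  show "\<And>x y. x \<in> X \<Longrightarrow> y \<in> X \<Longrightarrow> leX x y \<Longrightarrow> leY (pointwise_lub D x) (pointwise_lub D y)"
    using pointwise_lub_mono[OF D] by blast
next
  fix E e u assume E: "directed X leX E" and e: "is_lub X leX E e" and u: "u \<in> Y"
    and ub: "\<And>x. x \<in> E \<Longrightarrow> leY (pointwise_lub D x) u"
  have "e \<in> X" using e by (rule is_lubD)
  show "leY (pointwise_lub D e) u"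
  proof (rule is_lubD(3)[OF is_lub_pointwise_lub[OF D \<open>e \<in> X\<close>] u])
    fix t assume "t \<in> (\<lambda>d. d e) ` D"
    then obtain d where d: "d \<in> D" "t = d e" by blast
    have "d \<in> FS" using d directed_subset[OF D] by blast
    show "leY t u" unfolding d(2)
    proof (rule is_lubD(3)[OF fun_spaceD(4)[OF \<open>d \<in> FS\<close> E e] u])
      fix s assume "s \<in> d ` E"
      then obtain x where x: "x \<in> E" "s = d x" by blast
      have "x \<in> X" using x directed_subset[OF E] by blast
      have "leY (d x) (pointwise_lub D x)" using is_lubD(2)[OF is_lub_pointwise_lub[OF D \<open>x \<in> X\<close>]] d by blast
      then show "leY s u"
        using partial_order_on_trans[OF partial_order_Y fun_space_apply[OF \<open>d \<in> FS\<close> \<open>x \<in> X\<close>]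
            is_lubD(1)[OF is_lub_pointwise_lub[OF D \<open>x \<in> X\<close>]] u] ub x
        by blast
    qed
  qed
qed

lemma is_lub_fun_space_pointwise_lub:
  assumes D: "directed FS FL D"
  shows "is_lub FS FL D (pointwise_lub D)"
  unfolding is_lub_def
proof (intro conjI ballI impI)
  show "pointwise_lub D \<in> FS" using pointwise_lub_in_fun_space[OF D] .
  fix d assume "d \<in> D"
  then show "FL d (pointwise_lub D)" unfolding fun_le_def using is_lubD(2)[OF is_lub_pointwise_lub[OF D]] by blast
next
  fix u assume u: "u \<in> FS" and ub: "\<forall>d\<in>D. FL d u"
  show "FL (pointwise_lub D) u" unfolding fun_le_def
  proof
    fix x assume x: "x \<in> X"
    show "leY (pointwise_lub D x) (u x)"
      by (rule is_lubD(3)[OF is_lub_pointwise_lub[OF D x] fun_space_apply[OF u x]])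
        (use ub x in \<open>auto simp: fun_le_def\<close>)
  qed
qed

lemma is_lub_fun_space_apply:
  assumes D: "directed FS FL D" and h: "is_lub FS FL D h" and x: "x \<in> X"
  shows "is_lub Y leY ((\<lambda>d. d x) ` D) (h x)"
  using is_lub_unique[OF partial_order_fun_space h is_lub_fun_space_pointwise_lub[OF D]]
    is_lub_pointwise_lub[OF D x]
  by simp

lemma dcpo_fun_space: "dcpo FS FL"
  unfolding dcpo_def using partial_order_fun_space is_lub_fun_space_pointwise_lub by blast

(* A pair (c, b) in F stands for the single-step map sending x to b if c <= x and to the least
   element otherwise; step_fun F is the join of these maps. *)

definition step_data :: "('a \<Rightarrow> 'b) \<Rightarrow> ('a \<times> 'b) set \<Rightarrow> bool" where
  "step_data f F \<longleftrightarrow> finite F \<and> (\<forall>(c, b)\<in>F. c \<in> X \<and> compact_elem X leX c \<and> b \<in> Y \<and>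
      compact_elem Y leY b \<and> leY b (f c))"

definition step_values :: "('a \<times> 'b) set \<Rightarrow> 'a \<Rightarrow> 'b set" where
  "step_values F x = {b. \<exists>c. (c, b) \<in> F \<and> leX c x}"

definition step_fun :: "('a \<times> 'b) set \<Rightarrow> 'a \<Rightarrow> 'b" where
  "step_fun F = restrict (\<lambda>x. SOME s. is_lub Y leY (step_values F x) s) X"

lemma step_dataD:
  "step_data f F \<Longrightarrow> (c, b) \<in> F \<Longrightarrow>
    c \<in> X \<and> compact_elem X leX c \<and> b \<in> Y \<and> compact_elem Y leY b \<and> leY b (f c)"
  unfolding step_data_def by blast

lemma step_data_Un: "step_data f F \<Longrightarrow> step_data f G \<Longrightarrow> step_data f (F \<union> G)"
  unfolding step_data_def by blast

lemma step_values_below: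
  assumes f: "f \<in> FS" and F: "step_data f F" and x: "x \<in> X" and "b \<in> step_values F x"
  shows "leY b (f x)"
proof -
  obtain c where c: "(c, b) \<in> F" "leX c x" using \<open>b \<in> step_values F x\<close> unfolding step_values_def by blast
  have "c \<in> X" "b \<in> Y" "leY b (f c)" using step_dataD[OF F c(1)] by auto
  moreover have "leY (f c) (f x)" using fun_spaceD(3)[OF f \<open>c \<in> X\<close> x c(2)] .
  ultimately show ?thesis
    using partial_order_on_trans[OF partial_order_Y _ fun_space_apply[OF f] fun_space_apply[OF f x]] by blast
qed

lemma is_lub_step_values:
  assumes f: "f \<in> FS" and F: "step_data f F" and x: "x \<in> X"
  shows "is_lub Y leY (step_values F x) (step_fun F x)"
proof -
  have "step_values F x \<subseteq> snd ` F" unfolding step_values_def by force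
  then have "finite (step_values F x)" using F finite_subset unfolding step_data_def by blast
  moreover have "step_values F x \<subseteq> Y" using step_dataD[OF F] unfolding step_values_def by blast
  moreover have "\<exists>u\<in>Y. \<forall>b\<in>step_values F x. leY b u"
    using step_values_below[OF f F x] fun_space_apply[OF f x] by blast
  ultimately have "\<exists>s. is_lub Y leY (step_values F x) s"
    using bounded_complete_Y unfolding bounded_complete_def by simp
  then show ?thesis unfolding step_fun_def using x by (simp add: someI_ex)
qed

lemma step_fun_ge:
  "f \<in> FS \<Longrightarrow> step_data f F \<Longrightarrow> x \<in> X \<Longrightarrow> (c, b) \<in> F \<Longrightarrow> leX c x \<Longrightarrow> leY b (step_fun F x)"
  using is_lubD(2)[OF is_lub_step_values] unfolding step_values_def by blast

lemma step_fun_mono: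
  assumes f: "f \<in> FS" and F: "step_data f F" and x: "x \<in> X" and y: "y \<in> X" and "leX x y"
  shows "leY (step_fun F x) (step_fun F y)"
proof (rule is_lubD(3)[OF is_lub_step_values[OF f F x] is_lubD(1)[OF is_lub_step_values[OF f F y]]])
  fix b assume "b \<in> step_values F x"
  then obtain c where c: "(c, b) \<in> F" "leX c x" unfolding step_values_def by blast
  have "leX c y" using partial_order_on_trans[OF partial_order_X _ x y c(2) \<open>leX x y\<close>] step_dataD[OF F c(1)] by blast
  then show "leY b (step_fun F y)" using step_fun_ge[OF f F y c(1)] by blast
qed

lemma step_fun_in_fun_space:
  assumes f: "f \<in> FS" and F: "step_data f F"
  shows "step_fun F \<in> FS"
proof (rule fun_space_monotoneI)
  show "step_fun F \<in> extensional X" unfolding step_fun_def by simp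
  show "step_fun F \<in> X \<rightarrow> Y" using is_lubD(1)[OF is_lub_step_values[OF f F]] by blast
  show "\<And>x y. x \<in> X \<Longrightarrow> y \<in> X \<Longrightarrow> leX x y \<Longrightarrow> leY (step_fun F x) (step_fun F y)"
    using step_fun_mono[OF f F] by blast
next
  fix E e u assume E: "directed X leX E" and e: "is_lub X leX E e" and u: "u \<in> Y"
    and ub: "\<And>x. x \<in> E \<Longrightarrow> leY (step_fun F x) u"
  have "e \<in> X" using e by (rule is_lubD)
  show "leY (step_fun F e) u"
  proof (rule is_lubD(3)[OF is_lub_step_values[OF f F \<open>e \<in> X\<close>] u])
    fix b assume "b \<in> step_values F e"
    then obtain c where c: "(c, b) \<in> F" "leX c e" unfolding step_values_def by blast
    obtain x where x: "x \<in> E" "leX c x"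
      using compact_elem_below_lub[OF _ E e c(2)] step_dataD[OF F c(1)] by blast
    have "x \<in> X" using x directed_subset[OF E] by blast
    have "leY b (step_fun F x)" using step_fun_ge[OF f F \<open>x \<in> X\<close> c(1) x(2)] .
    then show "leY b u"
      using partial_order_on_trans[OF partial_order_Y _ is_lubD(1)[OF is_lub_step_values[OF f F \<open>x \<in> X\<close>]] u]
        step_dataD[OF F c(1)] ub x(1)
      by blast
  qed
qed

lemma step_fun_le_iff:
  assumes f: "f \<in> FS" and F: "step_data f F" and h: "h \<in> FS"
  shows "FL (step_fun F) h \<longleftrightarrow> (\<forall>(c, b)\<in>F. leY b (h c))"
proof
  assume le: "FL (step_fun F) h"
  show "\<forall>(c, b)\<in>F. leY b (h c)"
  proof safe
    fix c b assume cb: "(c, b) \<in> F"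
    then have "c \<in> X" "b \<in> Y" using step_dataD[OF F] by auto
    then have "leY b (step_fun F c)"
      using step_fun_ge[OF f F _ cb] partial_order_on_refl[OF partial_order_X] by blast
    moreover have "leY (step_fun F c) (h c)" using le \<open>c \<in> X\<close> unfolding fun_le_def by blast
    ultimately show "leY b (h c)"
      using partial_order_on_trans[OF partial_order_Y \<open>b \<in> Y\<close>
          is_lubD(1)[OF is_lub_step_values[OF f F \<open>c \<in> X\<close>]] fun_space_apply[OF h \<open>c \<in> X\<close>]]
      by blast
  qed
next
  assume hb: "\<forall>(c, b)\<in>F. leY b (h c)"
  show "FL (step_fun F) h" unfolding fun_le_def
  proof
    fix x assume x: "x \<in> X"
    show "leY (step_fun F x) (h x)"
    proof (rule is_lubD(3)[OF is_lub_step_values[OF f F x] fun_space_apply[OF h x]])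
      fix b assume "b \<in> step_values F x"
      then obtain c where c: "(c, b) \<in> F" "leX c x" unfolding step_values_def by blast
      have "c \<in> X" "b \<in> Y" using step_dataD[OF F c(1)] by auto
      have "leY (h c) (h x)" using fun_spaceD(3)[OF h \<open>c \<in> X\<close> x c(2)] .
      then show "leY b (h x)"
        using partial_order_on_trans[OF partial_order_Y \<open>b \<in> Y\<close> fun_space_apply[OF h \<open>c \<in> X\<close>]
            fun_space_apply[OF h x]] hb c(1)
        by blast
    qed
  qed
qed

lemma step_fun_le:
  assumes f: "f \<in> FS" and F: "step_data f F"
  shows "FL (step_fun F) f"
proof -
  have "\<forall>(c, b)\<in>F. leY b (f c)" using F unfolding step_data_def by auto
  then show ?thesis using step_fun_le_iff[OF f F f] by simp
qed

lemma step_fun_way_below: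
  assumes f: "f \<in> FS" and F: "step_data f F"
  shows "way_below FS FL (step_fun F) f"
  unfolding way_below_def
proof (intro allI impI)
  fix D h assume D: "directed FS FL D" and h: "is_lub FS FL D h" and "FL f h"
  have "h \<in> FS" using h by (rule is_lubD)
  have pair: "fst p \<in> X" "snd p \<in> Y" "compact_elem Y leY (snd p)" "leY (snd p) (f (fst p))"
    if "p \<in> F" for p
    using step_dataD[OF F, of "fst p" "snd p"] that by auto
  have witness: "\<exists>d\<in>D. leY (snd p) (d (fst p))" if "p \<in> F" for p
  proof -
    have "leY (f (fst p)) (h (fst p))" using \<open>FL f h\<close> pair[OF that] unfolding fun_le_def by blast
    then have "leY (snd p) (h (fst p))"
      using partial_order_on_trans[OF partial_order_Y pair(2)[OF that] fun_space_apply[OF f pair(1)[OF that]]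
          fun_space_apply[OF \<open>h \<in> FS\<close> pair(1)[OF that]]] pair(4)[OF that]
      by blast
    then show ?thesis
      using compact_elem_below_lub[OF pair(3)[OF that] directed_pointwise[OF D pair(1)[OF that]]
          is_lub_fun_space_apply[OF D h pair(1)[OF that]]]
      by blast
  qed
  have upward: "leY (snd p) (d' (fst p))"
    if "p \<in> F" "leY (snd p) (d (fst p))" "d \<in> D" "d' \<in> D" "FL d d'" for p d d'
  proof -
    have "d \<in> FS" "d' \<in> FS" using that directed_subset[OF D] by auto
    have "leY (d (fst p)) (d' (fst p))" using \<open>FL d d'\<close> pair(1)[OF that(1)] unfolding fun_le_def by blast
    then show ?thesis
      using partial_order_on_trans[OF partial_order_Y pair(2)[OF that(1)]
          fun_space_apply[OF \<open>d \<in> FS\<close> pair(1)[OF that(1)]] fun_space_apply[OF \<open>d' \<in> FS\<close> pair(1)[OF that(1)]]]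
        that(2)
      by blast
  qed
  have "finite F" using F unfolding step_data_def by blast
  have "\<exists>d\<in>D. \<forall>p\<in>F. leY (snd p) (d (fst p))"
    by (rule directed_finite_common_witness[OF D \<open>finite F\<close>]) (fact witness, metis upward)
  then obtain d where d: "d \<in> D" "\<forall>p\<in>F. leY (snd p) (d (fst p))" by blast
  have "d \<in> FS" using d(1) directed_subset[OF D] by blast
  have "\<forall>(c, b)\<in>F. leY b (d c)" using d(2) by auto
  then have "FL (step_fun F) d" using step_fun_le_iff[OF f F \<open>d \<in> FS\<close>] by simp
  then show "\<exists>d\<in>D. FL (step_fun F) d" using d(1) by blast
qed

definition step_approximants :: "('a \<Rightarrow> 'b) \<Rightarrow> ('a \<Rightarrow> 'b) set" where
  "step_approximants f = step_fun ` {F. step_data f F}"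

lemma directed_step_approximants:
  assumes f: "f \<in> FS"
  shows "directed FS FL (step_approximants f)"
  unfolding directed_def step_approximants_def
proof (intro conjI ballI)
  show "step_fun ` {F. step_data f F} \<subseteq> FS" using step_fun_in_fun_space[OF f] by blast
  have "step_data f {}" unfolding step_data_def by simp
  then show "step_fun ` {F. step_data f F} \<noteq> {}" by blast
next
  fix s t assume "s \<in> step_fun ` {F. step_data f F}" "t \<in> step_fun ` {F. step_data f F}"
  then obtain F G where FG: "step_data f F" "step_data f G" "s = step_fun F" "t = step_fun G" by blast
  have FG_data: "step_data f (F \<union> G)" using step_data_Un FG by blast
  have FG_fun: "step_fun (F \<union> G) \<in> FS" using step_fun_in_fun_space[OF f FG_data] .
  have "FL (step_fun H) (step_fun (F \<union> G))" if "H \<subseteq> F \<union> G" "step_data f H" for H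
  proof -
    have "leY b (step_fun (F \<union> G) c)" if "(c, b) \<in> H" for c b
    proof -
      have "c \<in> X" using step_dataD[OF \<open>step_data f H\<close> that] by blast
      then show ?thesis
        using step_fun_ge[OF f FG_data \<open>c \<in> X\<close> _ partial_order_on_refl[OF partial_order_X \<open>c \<in> X\<close>]]
          that \<open>H \<subseteq> F \<union> G\<close>
        by blast
    qed
    then show ?thesis using step_fun_le_iff[OF f \<open>step_data f H\<close> FG_fun] by auto
  qed
  then show "\<exists>u\<in>step_fun ` {F. step_data f F}. FL s u \<and> FL t u" using FG FG_data by blast
qed

lemma is_lub_step_approximants:
  assumes f: "f \<in> FS"
  shows "is_lub FS FL (step_approximants f) f"
  unfolding is_lub_def step_approximants_def
proof (intro conjI ballI impI)
  show "f \<in> FS" using f .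
  fix s assume "s \<in> step_fun ` {F. step_data f F}"
  then show "FL s f" using step_fun_le[OF f] by blast
next
  fix u assume u: "u \<in> FS" and ub: "\<forall>s\<in>step_fun ` {F. step_data f F}. FL s u"
  show "FL f u" unfolding fun_le_def
  proof
    fix x assume x: "x \<in> X"
    show "leY (f x) (u x)"
    proof (rule is_lubD(3)[OF fun_space_basis_image[OF f x] fun_space_apply[OF u x]])
      fix t assume "t \<in> f ` {c \<in> BX. way_below X leX c x}"
      then obtain c where c: "c \<in> BX" "way_below X leX c x" "t = f c" by blast
      have "c \<in> X" using c basis_X_subset by blast
      have "leX c x" using way_below_imp_le[OF partial_order_X x c(2)] .
      show "leY t (u x)" unfolding c(3)
      proof (rule is_lubD(3)[OF conjunct2[OF basis_Y_at[OF fun_space_apply[OF f \<open>c \<in> X\<close>]]] fun_space_apply[OF u x]])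
        fix b assume "b \<in> {b \<in> BY. way_below Y leY b (f c)}"
        then have b: "b \<in> BY" "way_below Y leY b (f c)" by auto
        have "b \<in> Y" using b basis_Y_subset by blast
        have F: "step_data f {(c, b)}"
          unfolding step_data_def
          using \<open>c \<in> X\<close> c(1) compact_basis_X b compact_basis_Y \<open>b \<in> Y\<close>
            way_below_imp_le[OF partial_order_Y fun_space_apply[OF f \<open>c \<in> X\<close>] b(2)]
          by auto
        have "FL (step_fun {(c, b)}) u" using ub F by blast
        then show "leY b (u x)"
          using step_fun_le_iff[OF f F u] fun_spaceD(3)[OF u \<open>c \<in> X\<close> x \<open>leX c x\<close>]
            partial_order_on_trans[OF partial_order_Y \<open>b \<in> Y\<close> fun_space_apply[OF u \<open>c \<in> X\<close>]
              fun_space_apply[OF u x]]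
          by blast
      qed
    qed
  qed
qed

lemma step_approximants_way_below:
  "f \<in> FS \<Longrightarrow> s \<in> step_approximants f \<Longrightarrow> way_below FS FL s f"
  unfolding step_approximants_def using step_fun_way_below by blast

end

section \<open>The weighted partial metric\<close>

lemma suminf_le_sum_plus_tail:
  fixes u w :: "nat \<Rightarrow> real"
  assumes u: "summable u" and w: "summable w" and le: "\<And>n. u n \<le> w n"
  shows "suminf u \<le> (\<Sum>n<N. u n) + (suminf w - (\<Sum>n<N. w n))"
proof -
  have "(\<Sum>n. u (n + N)) \<le> (\<Sum>n. w (n + N))"
    using le by (intro suminf_le summable_ignore_initial_segment u w)
  then show ?thesis
    using suminf_split_initial_segment[OF u, of N] suminf_minus_initial_segment[OF w, of N] by linarith
qed

locale weighted_fun_pm =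
  algebraic_fun_space X leX BX Y leY BY + quantified_dcpo Y leY pY
  for X :: "'a set" and leX and BX and Y :: "'b set" and leY and BY and pY +
  fixes \<theta> :: real and a :: "nat \<Rightarrow> 'a"
  assumes \<theta>_pos: "0 < \<theta>" and \<theta>_less_1: "\<theta> < 1"
    and pm_le_1: "\<forall>x\<in>Y. \<forall>y\<in>Y. pY x y \<le> 1"
    and basis_a: "is_basis X leX (a ` {1..})"
begin

abbreviation "P \<equiv> fun_pm \<theta> a pY"

lemma a_in_X: "a (Suc n) \<in> X"
  using basis_a unfolding is_basis_def by auto

lemma compact_elem_enumerated:
  assumes "c \<in> X" "compact_elem X leX c"
  obtains m where "c = a (Suc m)"
proof -
  have "c \<in> a ` {1..}" using compact_elem_in_basis[OF partial_order_X basis_a assms] .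
  then obtain k where "1 \<le> k" "c = a k" by auto
  then have "c = a (Suc (k - 1))" by simp
  then show ?thesis using that by blast
qed

lemma fun_space_eqI_enumeration:
  assumes f: "f \<in> FS" and g: "g \<in> FS" and eq: "\<And>n. f (a (Suc n)) = g (a (Suc n))"
  shows "f = g"
proof (rule extensionalityI[OF fun_spaceD(1)[OF f] fun_spaceD(1)[OF g]])
  fix x assume x: "x \<in> X"
  let ?E = "{c \<in> a ` {1..}. way_below X leX c x}"
  have E: "directed X leX ?E" "is_lub X leX ?E x" using basis_a x unfolding is_basis_def by auto
  have "f c = g c" if c: "c \<in> a ` {1..}" for c
  proof -
    obtain k where "1 \<le> k" "c = a k" using c by auto
    then show ?thesis using eq[of "k - 1"] by simp
  qed
  then have "f ` ?E = g ` ?E" by (intro image_cong) auto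
  then have "is_lub Y leY (f ` ?E) (g x)" using fun_spaceD(4)[OF g E] by simp
  then show "f x = g x" using is_lub_unique[OF partial_order_Y fun_spaceD(4)[OF f E]] by simp
qed

definition fun_pm_term :: "('a \<Rightarrow> 'b) \<Rightarrow> ('a \<Rightarrow> 'b) \<Rightarrow> nat \<Rightarrow> real" where
  "fun_pm_term f g n = \<theta> ^ Suc n * pY (f (a (Suc n))) (g (a (Suc n)))"

lemma fun_pm_eq_suminf: "P f g = (\<Sum>n. fun_pm_term f g n)"
  unfolding fun_pm_def fun_pm_term_def by simp

lemma summable_weights: "summable (\<lambda>n. \<theta> ^ Suc n)"
  using summable_mult[OF summable_geometric, of \<theta> \<theta>] \<theta>_pos \<theta>_less_1 by simp

lemma fun_pm_term_bounds:
  assumes "f \<in> FS" "g \<in> FS"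
  shows "0 \<le> fun_pm_term f g n" "fun_pm_term f g n \<le> \<theta> ^ Suc n"
proof -
  have "f (a (Suc n)) \<in> Y" "g (a (Suc n)) \<in> Y" using fun_space_apply assms a_in_X by auto
  then have "0 \<le> pY (f (a (Suc n))) (g (a (Suc n)))" "pY (f (a (Suc n))) (g (a (Suc n))) \<le> 1"
    using pm_nonneg pm_le_1 by auto
  then show "0 \<le> fun_pm_term f g n" "fun_pm_term f g n \<le> \<theta> ^ Suc n"
    unfolding fun_pm_term_def using \<theta>_pos mult_left_mono[of _ 1 "\<theta> ^ Suc n"] by auto
qed

lemma summable_fun_pm_term: "f \<in> FS \<Longrightarrow> g \<in> FS \<Longrightarrow> summable (fun_pm_term f g)"
  by (rule summable_comparison_test[OF _ summable_weights]) (use fun_pm_term_bounds in auto)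

lemma fun_pm_diff:
  "f \<in> FS \<Longrightarrow> g \<in> FS \<Longrightarrow> h \<in> FS \<Longrightarrow> k \<in> FS \<Longrightarrow>
    P f g - P h k = (\<Sum>n. fun_pm_term f g n - fun_pm_term h k n)"
  unfolding fun_pm_eq_suminf using suminf_diff summable_fun_pm_term by blast

lemma fun_pm_sym: "f \<in> FS \<Longrightarrow> g \<in> FS \<Longrightarrow> P f g = P g f"
  unfolding fun_pm_eq_suminf fun_pm_term_def using pm_sym fun_space_apply a_in_X by simp

lemma fun_pm_term_self_le:
  "f \<in> FS \<Longrightarrow> g \<in> FS \<Longrightarrow> fun_pm_term f f n \<le> fun_pm_term f g n"
  unfolding fun_pm_term_def using pm_self_le fun_space_apply a_in_X \<theta>_pos by (simp add: mult_left_mono)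

lemma fun_pm_excess_bound:
  assumes h: "h \<in> FS" and f: "f \<in> FS"
  shows "pY (h (a (Suc m))) (f (a (Suc m))) - pY (f (a (Suc m))) (f (a (Suc m)))
    \<le> (P h f - P f f) / \<theta> ^ Suc m"
proof -
  have "fun_pm_term f f n \<le> fun_pm_term h f n" for n
    using fun_pm_term_self_le[OF f h, of n] pm_sym fun_space_apply[OF f a_in_X] fun_space_apply[OF h a_in_X]
    unfolding fun_pm_term_def by simp
  then have "(\<Sum>n\<in>{m}. fun_pm_term h f n - fun_pm_term f f n) \<le> (\<Sum>n. fun_pm_term h f n - fun_pm_term f f n)"
    by (intro sum_le_suminf summable_diff summable_fun_pm_term h f) auto
  then have "\<theta> ^ Suc m * (pY (h (a (Suc m))) (f (a (Suc m))) - pY (f (a (Suc m))) (f (a (Suc m))))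
      \<le> P h f - P f f"
    using fun_pm_diff[OF h f f f] unfolding fun_pm_term_def by (simp add: right_diff_distrib)
  moreover have "0 < \<theta> ^ Suc m" using \<theta>_pos by simp
  ultimately show ?thesis by (simp add: pos_le_divide_eq mult.commute)
qed

lemma fun_pm_eqI:
  assumes f: "f \<in> FS" and g: "g \<in> FS" and eq: "P f f = P f g" "P f g = P g g"
  shows "f = g"
proof (rule fun_space_eqI_enumeration[OF f g])
  fix n
  let ?x = "a (Suc n)"
  have "f ?x \<in> Y" "g ?x \<in> Y" using fun_space_apply f g a_in_X by auto
  have "pY (g ?x) (f ?x) - pY (f ?x) (f ?x) \<le> 0"
    using fun_pm_excess_bound[OF g f, of n] eq fun_pm_sym[OF f g] by simp
  moreover have "pY (f ?x) (g ?x) - pY (g ?x) (g ?x) \<le> 0"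
    using fun_pm_excess_bound[OF f g, of n] eq by simp
  ultimately have "pY (f ?x) (f ?x) = pY (f ?x) (g ?x)" "pY (f ?x) (g ?x) = pY (g ?x) (g ?x)"
    using pm_self_le[OF \<open>f ?x \<in> Y\<close> \<open>g ?x \<in> Y\<close>] pm_self_le[OF \<open>g ?x \<in> Y\<close> \<open>f ?x \<in> Y\<close>]
      pm_sym[OF \<open>f ?x \<in> Y\<close> \<open>g ?x \<in> Y\<close>]
    by linarith+
  then show "f ?x = g ?x" using pm_eqI[OF \<open>f ?x \<in> Y\<close> \<open>g ?x \<in> Y\<close>] by blast
qed

lemma fun_pm_triangle:
  assumes f: "f \<in> FS" and g: "g \<in> FS" and h: "h \<in> FS"
  shows "P f g \<le> P f h + P h g - P h h"
proof -
  have "fun_pm_term f g n \<le> fun_pm_term f h n + fun_pm_term h g n - fun_pm_term h h n" for n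
    unfolding fun_pm_term_def
    using pm_triangle[OF fun_space_apply[OF f a_in_X] fun_space_apply[OF g a_in_X] fun_space_apply[OF h a_in_X]] \<theta>_pos
    by (simp add: mult_left_mono flip: distrib_left right_diff_distrib)
  then have "P f g \<le> (\<Sum>n. fun_pm_term f h n + fun_pm_term h g n - fun_pm_term h h n)"
    unfolding fun_pm_eq_suminf
    by (intro suminf_le summable_diff summable_add summable_fun_pm_term f g h)
  also have "\<dots> = P f h + P h g - P h h"
    unfolding fun_pm_eq_suminf
    using suminf_add[OF summable_fun_pm_term[OF f h] summable_fun_pm_term[OF h g]]
      suminf_diff[OF summable_add[OF summable_fun_pm_term[OF f h] summable_fun_pm_term[OF h g]]
        summable_fun_pm_term[OF h h]]
    by simp
  finally show ?thesis .
qed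

lemma partial_metric_fun_pm: "partial_metric FS P"
  unfolding partial_metric_def
proof (intro conjI ballI impI)
  fix f g assume f: "f \<in> FS" and g: "g \<in> FS"
  show "0 \<le> P f g"
    unfolding fun_pm_eq_suminf using suminf_nonneg[OF summable_fun_pm_term[OF f g]] fun_pm_term_bounds[OF f g] by blast
  show "P f f \<le> P f g"
    unfolding fun_pm_eq_suminf
    by (rule suminf_le[OF fun_pm_term_self_le[OF f g] summable_fun_pm_term[OF f f] summable_fun_pm_term[OF f g]])
  show "P f g = P g f" using fun_pm_sym[OF f g] .
next
  fix f g assume "f \<in> FS" "g \<in> FS" "P f f = P f g \<and> P f g = P g g"
  then show "f = g" using fun_pm_eqI by blast
next
  fix f g h assume "f \<in> FS" "g \<in> FS" "h \<in> FS"
  then show "P f g \<le> P f h + P h g - P h h" by (rule fun_pm_triangle)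
qed

lemma fun_pm_antimono:
  assumes f: "f \<in> FS" and g: "g \<in> FS" and k: "k \<in> FS" and "FL f g"
  shows "P g k \<le> P f k"
  unfolding fun_pm_eq_suminf
proof (rule suminf_le[OF _ summable_fun_pm_term[OF g k] summable_fun_pm_term[OF f k]])
  fix n
  have "pY (g (a (Suc n))) (k (a (Suc n))) \<le> pY (f (a (Suc n))) (k (a (Suc n)))"
    using pm_antimono fun_space_apply f g k a_in_X \<open>FL f g\<close> unfolding fun_le_def by blast
  then show "fun_pm_term g k n \<le> fun_pm_term f k n" unfolding fun_pm_term_def using \<theta>_pos by (simp add: mult_left_mono)
qed


lemma fun_pm_excess_le_truncation:
  assumes d: "d \<in> FS" and f: "f \<in> FS" and k: "k \<in> FS" and "0 \<le> \<delta>"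
    and close: "\<And>n. n < N \<Longrightarrow>
      pY (d (a (Suc n))) (k (a (Suc n))) \<le> pY (f (a (Suc n))) (k (a (Suc n))) + \<delta>"
  shows "P d k - P f k \<le> real N * \<delta> + ((\<Sum>n. \<theta> ^ Suc n) - (\<Sum>n<N. \<theta> ^ Suc n))"
proof -
  have excess_le_weight: "fun_pm_term d k n - fun_pm_term f k n \<le> \<theta> ^ Suc n" for n
    using fun_pm_term_bounds[OF d k, of n] fun_pm_term_bounds[OF f k, of n] by linarith
  have excess_le_\<delta>: "fun_pm_term d k n - fun_pm_term f k n \<le> \<delta>" if "n < N" for n
  proof -
    have "fun_pm_term d k n - fun_pm_term f k n
        = \<theta> ^ Suc n * (pY (d (a (Suc n))) (k (a (Suc n))) - pY (f (a (Suc n))) (k (a (Suc n))))"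
      unfolding fun_pm_term_def by (simp add: right_diff_distrib)
    also have "\<dots> \<le> \<theta> ^ Suc n * \<delta>" using close[OF that] \<theta>_pos by (intro mult_left_mono) auto
    also have "\<dots> \<le> \<delta>" using \<open>0 \<le> \<delta>\<close> \<theta>_pos \<theta>_less_1 power_le_one[of \<theta> "Suc n"]
      by (intro mult_left_le_one_le) auto
    finally show ?thesis .
  qed
  have "P d k - P f k = (\<Sum>n. fun_pm_term d k n - fun_pm_term f k n)"
    using fun_pm_diff[OF d k f k] .
  also have "\<dots> \<le> (\<Sum>n<N. fun_pm_term d k n - fun_pm_term f k n)
      + ((\<Sum>n. \<theta> ^ Suc n) - (\<Sum>n<N. \<theta> ^ Suc n))"
    by (intro suminf_le_sum_plus_tail summable_diff summable_fun_pm_term summable_weights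
        excess_le_weight d f k)
  also have "(\<Sum>n<N. fun_pm_term d k n - fun_pm_term f k n) \<le> real N * \<delta>"
    using sum_mono[of "{..<N}", OF excess_le_\<delta>] by simp
  finally show ?thesis by simp
qed

lemma fun_pm_below_directed_lub:
  assumes D: "directed FS FL D" and f: "is_lub FS FL D f" and k: "k \<in> FS" and less: "P f k < t"
  shows "\<exists>d\<in>D. P d k < t"
proof -
  have "f \<in> FS" using f by (rule is_lubD)
  define \<gamma> where "\<gamma> = t - P f k"
  have "0 < \<gamma>" using less \<gamma>_def by simp
  have "\<forall>\<^sub>F N in sequentially. (\<Sum>n. \<theta> ^ Suc n) - \<gamma> / 2 < (\<Sum>n<N. \<theta> ^ Suc n)"
    using order_tendstoD(1)[OF summable_LIMSEQ[OF summable_weights]] \<open>0 < \<gamma>\<close> by simp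
  then obtain N where "(\<Sum>n. \<theta> ^ Suc n) - \<gamma> / 2 < (\<Sum>n<N. \<theta> ^ Suc n)"
    unfolding eventually_sequentially by blast
  define \<delta> where "\<delta> = \<gamma> / (2 * (real N + 1))"
  have "0 < \<delta>" and "real N * \<delta> < \<gamma> / 2" using \<open>0 < \<gamma>\<close> unfolding \<delta>_def by (simp_all add: field_simps)
  let ?close = "\<lambda>n d. pY (d (a (Suc n))) (k (a (Suc n))) < pY (f (a (Suc n))) (k (a (Suc n))) + \<delta>"
  have witness: "\<exists>d\<in>D. ?close n d" if "n \<in> {..<N}" for n
    using pm_below_directed_lub[OF directed_pointwise[OF D a_in_X] is_lub_fun_space_apply[OF D f a_in_X]
        fun_space_apply[OF k a_in_X]] \<open>0 < \<delta>\<close>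
    by simp
  have upward: "?close n d'" if "n \<in> {..<N}" "?close n d" "d \<in> D" "d' \<in> D" "FL d d'" for n d d'
  proof -
    have "d \<in> FS" "d' \<in> FS" using that(3,4) directed_subset[OF D] by auto
    then have "pY (d' (a (Suc n))) (k (a (Suc n))) \<le> pY (d (a (Suc n))) (k (a (Suc n)))"
      using pm_antimono fun_space_apply[OF _ a_in_X] k \<open>FL d d'\<close> a_in_X unfolding fun_le_def by blast
    then show ?thesis using that(2) by linarith
  qed
  have "\<exists>d\<in>D. \<forall>n\<in>{..<N}. ?close n d"
    by (rule directed_finite_common_witness[OF D finite_lessThan]) (fact witness, metis upward)
  then obtain d where "d \<in> D" and close: "\<forall>n<N. ?close n d" by auto
  have "d \<in> FS" using \<open>d \<in> D\<close> directed_subset[OF D] by blast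
  have "P d k - P f k \<le> real N * \<delta> + ((\<Sum>n. \<theta> ^ Suc n) - (\<Sum>n<N. \<theta> ^ Suc n))"
    using close \<open>0 < \<delta>\<close> by (intro fun_pm_excess_le_truncation \<open>d \<in> FS\<close> \<open>f \<in> FS\<close> k) auto
  then have "P d k < t"
    using \<open>(\<Sum>n. \<theta> ^ Suc n) - \<gamma> / 2 < (\<Sum>n<N. \<theta> ^ Suc n)\<close> \<open>real N * \<delta> < \<gamma> / 2\<close> \<gamma>_def
    by linarith
  then show ?thesis using \<open>d \<in> D\<close> by blast
qed

lemma pm_open_imp_scott_open:
  assumes U: "U \<in> pm_open_sets FS P"
  shows "U \<in> scott_open_sets FS FL"
proof -
  have "U \<subseteq> FS" and ball: "\<And>f. f \<in> U \<Longrightarrow> \<exists>e>0. pm_ball FS P f e \<subseteq> U"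
    using U by (auto simp: pm_open_sets_iff[OF partial_metric_fun_pm])
  show ?thesis
  proof (rule scott_open_setsI[OF \<open>U \<subseteq> FS\<close>])
    fix f h assume "f \<in> U" "h \<in> FS" "FL f h"
    obtain e where "0 < e" "pm_ball FS P f e \<subseteq> U" using ball[OF \<open>f \<in> U\<close>] by blast
    have "f \<in> FS" using \<open>f \<in> U\<close> \<open>U \<subseteq> FS\<close> by blast
    then have "P h f \<le> P f f" using fun_pm_antimono \<open>h \<in> FS\<close> \<open>FL f h\<close> by blast
    then have "h \<in> pm_ball FS P f e" using \<open>h \<in> FS\<close> \<open>0 < e\<close> by (simp add: pm_ball_def)
    then show "h \<in> U" using \<open>pm_ball FS P f e \<subseteq> U\<close> by blast
  next
    fix D f assume D: "directed FS FL D" and f: "is_lub FS FL D f" "f \<in> U"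
    obtain e where "0 < e" "pm_ball FS P f e \<subseteq> U" using ball[OF \<open>f \<in> U\<close>] by blast
    have "f \<in> FS" using \<open>f \<in> U\<close> \<open>U \<subseteq> FS\<close> by blast
    then obtain d where "d \<in> D" "P d f < P f f + e"
      using fun_pm_below_directed_lub[OF D f(1) \<open>f \<in> FS\<close>, of "P f f + e"] \<open>0 < e\<close> by auto
    then have "d \<in> pm_ball FS P f e" using directed_subset[OF D] by (auto simp: pm_ball_def)
    then show "\<exists>d\<in>D. d \<in> U" using \<open>d \<in> D\<close> \<open>pm_ball FS P f e \<subseteq> U\<close> by blast
  next
    fix f assume "f \<in> U"
    then have "f \<in> FS" using \<open>U \<subseteq> FS\<close> by blast
    then show "\<exists>D. directed FS FL D \<and> is_lub FS FL D f \<and> (\<forall>d\<in>D. way_below FS FL d f)"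
      using directed_step_approximants is_lub_step_approximants step_approximants_way_below
      by (intro exI[of _ "step_approximants f"]) blast
  qed
qed

lemma pm_ball_fun_pm_apply:
  assumes f: "f \<in> FS" and h: "h \<in> pm_ball FS P f (\<theta> ^ Suc m * \<eta>)"
  shows "h (a (Suc m)) \<in> pm_ball Y pY (f (a (Suc m))) \<eta>"
proof -
  have "h \<in> FS" and "P h f - P f f < \<theta> ^ Suc m * \<eta>" using h by (auto simp: pm_ball_def)
  moreover have "0 < \<theta> ^ Suc m" using \<theta>_pos by simp
  ultimately have "(P h f - P f f) / \<theta> ^ Suc m < \<eta>"
    by (simp only: pos_divide_less_eq mult.commute)
  then have "pY (h (a (Suc m))) (f (a (Suc m))) - pY (f (a (Suc m))) (f (a (Suc m))) < \<eta>"
    using fun_pm_excess_bound[OF \<open>h \<in> FS\<close> f, of m] by linarith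
  then show ?thesis using fun_space_apply[OF \<open>h \<in> FS\<close> a_in_X] by (simp add: pm_ball_def)
qed

lemma pm_open_sets_preimage_apply:
  assumes V: "V \<in> pm_open_sets Y pY"
  shows "{h \<in> FS. h (a (Suc m)) \<in> V} \<in> pm_open_sets FS P"
  unfolding pm_open_sets_iff[OF partial_metric_fun_pm]
proof (intro conjI ballI)
  fix f assume "f \<in> {h \<in> FS. h (a (Suc m)) \<in> V}"
  then have "f \<in> FS" "f (a (Suc m)) \<in> V" by auto
  then obtain \<eta> where "0 < \<eta>" "pm_ball Y pY (f (a (Suc m))) \<eta> \<subseteq> V"
    using V by (auto simp: pm_open_sets_iff[OF partial_metric])
  then have "h (a (Suc m)) \<in> V" if "h \<in> pm_ball FS P f (\<theta> ^ Suc m * \<eta>)" for h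
    using pm_ball_fun_pm_apply[OF \<open>f \<in> FS\<close> that] by blast
  then have "pm_ball FS P f (\<theta> ^ Suc m * \<eta>) \<subseteq> {h \<in> FS. h (a (Suc m)) \<in> V}"
    using pm_ball_subset[of FS P f] by blast
  moreover have "0 < \<theta> ^ Suc m * \<eta>" using \<theta>_pos \<open>0 < \<eta>\<close> by simp
  ultimately show "\<exists>e>0. pm_ball FS P f e \<subseteq> {h \<in> FS. h (a (Suc m)) \<in> V}" by blast
qed blast

lemma pm_open_sets_above_step_fun:
  assumes f: "f \<in> FS" and F: "step_data f F"
  shows "{h \<in> FS. FL (step_fun F) h} \<in> pm_open_sets FS P"
proof -
  have "FS \<inter> (\<Inter>p\<in>F. {h \<in> FS. leY (snd p) (h (fst p))}) \<in> pm_open_sets FS P"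
  proof (rule pm_open_sets_INT_finite[OF partial_metric_fun_pm])
    show "finite F" using F unfolding step_data_def by blast
  next
    fix p assume "p \<in> F"
    then have "fst p \<in> X" "compact_elem X leX (fst p)" "snd p \<in> Y" "compact_elem Y leY (snd p)"
      using step_dataD[OF F, of "fst p" "snd p"] by auto
    then obtain m where m: "fst p = a (Suc m)" using compact_elem_enumerated by blast
    have upset: "{y \<in> Y. leY (snd p) y} \<in> pm_open_sets Y pY"
      using scott_open_upset_compact[OF partial_order_Y \<open>snd p \<in> Y\<close> \<open>compact_elem Y leY (snd p)\<close>]
      by (simp add: scott_open_sets_eq)
    have "{h \<in> FS. leY (snd p) (h (fst p))} = {h \<in> FS. h (a (Suc m)) \<in> {y \<in> Y. leY (snd p) y}}"
      using m fun_space_apply[OF _ \<open>fst p \<in> X\<close>] by auto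
    then show "{h \<in> FS. leY (snd p) (h (fst p))} \<in> pm_open_sets FS P"
      using pm_open_sets_preimage_apply[OF upset, of m] by (simp only:)
  qed
  moreover have "FS \<inter> (\<Inter>p\<in>F. {h \<in> FS. leY (snd p) (h (fst p))}) = {h \<in> FS. FL (step_fun F) h}"
    using step_fun_le_iff[OF f F] by (auto simp: case_prod_unfold)
  ultimately show ?thesis by simp
qed

lemma scott_open_imp_pm_open:
  assumes U: "U \<in> scott_open_sets FS FL"
  shows "U \<in> pm_open_sets FS P"
  unfolding pm_open_sets_iff[OF partial_metric_fun_pm]
proof (intro conjI ballI)
  have "U \<subseteq> FS" and upper: "\<And>g h. g \<in> U \<Longrightarrow> h \<in> FS \<Longrightarrow> FL g h \<Longrightarrow> h \<in> U"
    using U unfolding scott_open_sets_def by auto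
  show "U \<subseteq> FS" by fact
  fix f assume "f \<in> U"
  then have f: "f \<in> FS" using \<open>U \<subseteq> FS\<close> by blast
  obtain s where "s \<in> step_approximants f" "s \<in> U"
    using scott_open_inaccessible[OF partial_order_fun_space U directed_step_approximants[OF f]
        is_lub_step_approximants[OF f] \<open>f \<in> U\<close>]
    by blast
  then obtain F where F: "step_data f F" "step_fun F \<in> U" unfolding step_approximants_def by blast
  let ?W = "{h \<in> FS. FL (step_fun F) h}"
  have "f \<in> ?W" using f step_fun_le[OF f F(1)] by blast
  then obtain e where "0 < e" "pm_ball FS P f e \<subseteq> ?W"
    using pm_open_sets_above_step_fun[OF f F(1)] unfolding pm_open_sets_iff[OF partial_metric_fun_pm] by blast
  moreover have "?W \<subseteq> U" using upper[OF F(2)] by blast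
  ultimately show "\<exists>e>0. pm_ball FS P f e \<subseteq> U" by blast
qed

theorem quantified_by_fun_pm: "quantified_by FS FL P"
proof -
  have "scott_open_sets FS FL = pm_open_sets FS P"
    using scott_open_imp_pm_open pm_open_imp_scott_open by auto
  then show ?thesis using dcpo_fun_space partial_metric_fun_pm unfolding quantified_by_def by blast
qed

end

theorem mainTheorem7:
  fixes X :: "'a set" and leX :: "'a \<Rightarrow> 'a \<Rightarrow> bool" and pX :: "'a \<Rightarrow> 'a \<Rightarrow> real"
    and Y :: "'b set" and leY :: "'b \<Rightarrow> 'b \<Rightarrow> bool" and pY :: "'b \<Rightarrow> 'b \<Rightarrow> real"
    and a :: "nat \<Rightarrow> 'a" and \<theta> :: real
  assumes "scott_domain X leX" and "scott_domain Y leY"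
    and "quantified_by X leX pX" and "quantified_by Y leY pY"
    and "\<forall>x\<in>X. \<forall>y\<in>X. 0 \<le> pX x y \<and> pX x y \<le> 1"
    and "\<forall>x\<in>Y. \<forall>y\<in>Y. 0 \<le> pY x y \<and> pY x y \<le> 1"
    and "countable (a ` {1..})" and "is_basis X leX (a ` {1..})"
    and "0 < \<theta>" and "\<theta> \<le> 1/2"
  shows "quantified_by (fun_space X leX Y leY) (fun_le X leY) (fun_pm \<theta> a pY)"
proof -
  obtain BX where "is_basis X leX BX" "\<forall>c\<in>BX. compact_elem X leX c"
    using assms(1) unfolding scott_domain_def by blast
  moreover obtain BY where "is_basis Y leY BY" "\<forall>b\<in>BY. compact_elem Y leY b"
    using assms(2) unfolding scott_domain_def by blast
  moreover have "partial_order_on X leX" "dcpo Y leY" "bounded_complete Y leY"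
    using assms(1,2) by (simp_all add: scott_domain_def dcpo_def)
  moreover have "\<forall>x\<in>Y. \<forall>y\<in>Y. pY x y \<le> 1" using assms(6) by blast
  moreover have "\<theta> < 1" using assms(10) by simp
  ultimately interpret weighted_fun_pm X leX BX Y leY BY pY \<theta> a
    using assms(4,8,9) by unfold_locales blast+
  show ?thesis by (rule quantified_by_fun_pm)
qed

end
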